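(* Let $a,m\in\mathbb Z^+$ and let $\psi:\mathbb Z\to\mathbb Z$ be a function such that for every $k\in\mathbb Z$ and every $j\in\{1,\dots,a\}$, $$\psi(k)\equiv\psi(-k)\pmod{3^a}\quad\text{and}\quad \psi(k+3^j)\equiv\psi(k)\pmod{3^j}.$$ Then $$\sum_{k=1}^{3^am-1}q^{\psi(k)}\left(\frac{k}{3}\right)\begin{bmatrix}2\cdot 3^am\\k\end{bmatrix}_q\equiv 0\pmod{[3^a]_q^2}.$$ In particular, $$\sum_{k=1}^{3^am-1}\left(\frac{k}{3}\right)\begin{bmatrix}2\cdot 3^am\\k\end{bmatrix}_q\equiv 0\pmod{[3^a]_q^2}.$$
   Context: $\left(\frac{k}{3}\right)$ is the Legendre symbol: $0$ if $3\mid k$, $1$ if $k\equiv1\pmod 3$, $-1$ if $k\equiv 2\pmod 3$. For $n\in\mathbb N$, $[n]_q=\frac{1-q^n}{1-q}=\sum_{0\le j<n}q^j$. For $n,k\in\mathbb N$ the $q$-binomial coefficient is $\begin{bmatrix}n\\k\end{bmatrix}_q=\frac{[n]_q[n-1]_q\cdots[n-k+1]_q}{[1]_q[2]_q\cdots[k]_q}$ if $0<k\le n$, equal to $1$ if $k=0$, and $0$ if $k>n$. Since $\psi$ may take negative values, the sum is a Laurent polynomial in $q$; the congruence means the sum equals $[3^a]_q^2$ times an element of $\mathbb Z[q,q^{-1}]$. *)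

theory Defs
  imports "HOL-Computational_Algebra.Computational_Algebra" "HOL-Number_Theory.Residues"
begin

definition qint :: "nat \<Rightarrow> int poly" where
  "qint n = (\<Sum>j<n. Polynomial.monom 1 j)"

definition qbinom :: "nat \<Rightarrow> nat \<Rightarrow> int poly" where
  "qbinom n k =
     (if k = 0 then 1
      else if k \<le> n then (\<Prod>i\<in>{n-k+1..n}. qint i) div (\<Prod>i\<in>{1..k}. qint i)
      else 0)"

definition poly_to_fls :: "int poly \<Rightarrow> int fls" where
  "poly_to_fls p = fps_to_fls (fps_of_poly p)"

definition laurent_poly :: "int fls \<Rightarrow> bool" where
  "laurent_poly f \<longleftrightarrow> finite {n. fls_nth f n \<noteq> 0}"

end

theory Submission
  imports Defs
begin

(* Put N = 2 * 3^a * m and H = N div 2, and let Q = [3^a]_q.  Since Q is monic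
   with integer coefficients, it suffices to show Q^2 divides the (exponent-shifted) sum over
   the complex numbers; since Q has only simple roots, it suffices to show that (X - z)^2
   divides the sum for every root z of Q.  Such a z is a root of unity of order d = 3^j with
   1 <= j <= a.  For k < N with d not dividing k the q-binomial [N, k]_q vanishes at z, so
   [N, k]_q = (X - z) * R_k; the term of index k, weighted by the Legendre symbol, is thus
   (X - z) times a polynomial whose value at z is (k/3) z^psi(k) R_k(z).  The reflection
   k = d s + r  |->  d s + (d - r) inside each block of length d is an involution on the
   indices 1 <= k < H prime to 3 that preserves R_k(z) (by the ratio recursion of q-binomials)
   and z^psi(k) (by the hypotheses on psi) but flips (k/3).  Hence these values cancel and
   (X - z)^2 divides the sum. *)

lemma qint_Suc: "qint (Suc n) = qint n + Polynomial.monom 1 n"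
  by (simp add: qint_def)

lemma qint_add: "qint (a + b) = qint a + Polynomial.monom 1 a * qint b"
proof (induction b)
  case 0 then show ?case by (simp add: qint_def)
next
  case (Suc b)
  have "qint (a + Suc b) = qint (a + b) + Polynomial.monom 1 (a + b)" by (simp add: qint_def)
  also have "\<dots> = qint a + Polynomial.monom 1 a * (qint b + Polynomial.monom 1 b)"
    using Suc by (simp add: algebra_simps mult_monom)
  finally show ?case by (simp add: qint_Suc)
qed

lemma qint_nonzero: "n > 0 \<Longrightarrow> qint n \<noteq> 0"
proof -
  have "poly (qint n) 1 = int n"
    by (induction n) (simp_all add: qint_def poly_monom)
  then show "n > 0 \<Longrightarrow> qint n \<noteq> 0" by auto
qed

text \<open>The classical identity \<open>[n]_q (q - 1) = q^n - 1\<close>; it shows that \<open>[n]_q\<close>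
  divides a polynomial with simple roots.\<close>
lemma qint_times_X_minus_1: "qint n * [:-1, 1:] = Polynomial.monom 1 n - 1"
proof (induction n)
  case 0 then show ?case by (simp add: qint_def)
next
  case (Suc n)
  have "[:-1, 1:] = Polynomial.monom (1::int) 1 - 1" by (simp add: monom_Suc one_pCons)
  then have "Polynomial.monom 1 n * [:-1, 1:] = Polynomial.monom 1 (Suc n) - Polynomial.monom (1::int) n"
    by (simp only: right_diff_distrib mult_monom) simp
  moreover have "qint (Suc n) * [:-1, 1:] = qint n * [:-1, 1:] + Polynomial.monom 1 n * [:-1, 1:]"
    by (simp only: qint_Suc distrib_right)
  ultimately show ?case using Suc by simp
qed

lemma qint_monic: "degree (qint (Suc n)) = n \<and> lead_coeff (qint (Suc n)) = 1"
proof (induction n)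
  case 0 then show ?case by (simp add: qint_def)
next
  case (Suc n)
  have deg: "degree (qint (Suc (Suc n))) = Suc n"
    unfolding qint_Suc[of "Suc n"] using Suc
    by (subst degree_add_eq_right) (auto simp: degree_monom_eq)
  have "Polynomial.coeff (qint (Suc n)) (Suc n) = 0" using Suc by (simp add: coeff_eq_0)
  then show ?case using deg by (simp add: qint_Suc[of "Suc n"])
qed

definition qfact :: "nat \<Rightarrow> int poly" where
  "qfact k = (\<Prod>i<k. qint (Suc i))"

definition qfalling :: "nat \<Rightarrow> nat \<Rightarrow> int poly" where
  "qfalling n k = (\<Prod>i<k. qint (n - i))"

text \<open>The q-binomial coefficients given by the q-Pascal recursion; they are polynomials by
  construction, and \<open>qbin_times_qfact\<close> identifies them with the quotient used in \<open>qbinom\<close>.\<close>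
fun qbin :: "nat \<Rightarrow> nat \<Rightarrow> int poly" where
  "qbin n 0 = 1"
| "qbin 0 (Suc k) = 0"
| "qbin (Suc n) (Suc k) = qbin n k + Polynomial.monom 1 (Suc k) * qbin n (Suc k)"

lemma qbin_eq_0: "n < k \<Longrightarrow> qbin n k = 0"
  by (induction n k rule: qbin.induct) auto

lemma qfact_nonzero: "qfact k \<noteq> 0"
  unfolding qfact_def by (auto simp: qint_nonzero)

lemma qbin_times_qfact: "qbin n k * qfact k = qfalling n k"
proof (induction n arbitrary: k)
  case 0 then show ?case by (cases k) (auto simp: qfact_def qfalling_def qint_def)
next
  case (Suc n)
  have step: "qbin (Suc n) (Suc k) * qfact (Suc k) = qfalling (Suc n) (Suc k)" for k
  proof -
    have fact_Suc: "qfact (Suc k) = qfact k * qint (Suc k)" by (simp add: qfact_def)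
    have falling_Suc: "qfalling n (Suc k) = qfalling n k * qint (n - k)" by (simp add: qfalling_def)
    have falling_shift: "qfalling (Suc n) (Suc k) = qint (Suc n) * qfalling n k"
      unfolding qfalling_def by (subst prod.lessThan_Suc_shift) simp
    have "qbin (Suc n) (Suc k) * qfact (Suc k)
        = qbin n k * qfact k * qint (Suc k) + Polynomial.monom 1 (Suc k) * (qbin n (Suc k) * qfact (Suc k))"
      by (simp add: fact_Suc algebra_simps)
    also have "\<dots> = qfalling n k * (qint (Suc k) + Polynomial.monom 1 (Suc k) * qint (n - k))"
      using Suc.IH falling_Suc by (simp add: algebra_simps)
    also have "\<dots> = qfalling (Suc n) (Suc k)"
    proof (cases "k \<le> n")
      case True
      then show ?thesis using qint_add[of "Suc k" "n - k"] falling_shift by (simp add: mult.commute)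
    next
      case False
      then have "qfalling n k = 0"
        unfolding qfalling_def by (auto simp: qint_def intro!: bexI[of _ n])
      then show ?thesis using falling_shift by simp
    qed
    finally show ?thesis .
  qed
  show ?case using step by (cases k) (auto simp: qfact_def qfalling_def)
qed

lemma qbinom_eq_qbin: "qbinom n k = qbin n k"
proof -
  consider "k = 0" | "0 < k" "k \<le> n" | "n < k" by linarith
  then show ?thesis
  proof cases
    case 2
    have falling: "qfalling n k = (\<Prod>i\<in>{n-k+1..n}. qint i)"
      unfolding qfalling_def
      by (rule prod.reindex_bij_witness[where i="\<lambda>i. n - i" and j="\<lambda>i. n - i"]) (use 2 in auto)
    have fact: "qfact k = (\<Prod>i\<in>{1..k}. qint i)"
      unfolding qfact_def
      by (rule prod.reindex_bij_witness[where i="\<lambda>i. i - 1" and j="\<lambda>i. Suc i"]) auto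
    have "qbinom n k = qfalling n k div qfact k"
      using 2 by (simp add: qbinom_def falling fact)
    also have "\<dots> = qbin n k" by (simp add: qbin_times_qfact[symmetric] qfact_nonzero)
    finally show ?thesis .
  qed (auto simp: qbinom_def qbin_eq_0)
qed

lemma qbin_ratio: "qbin n (Suc k) * qint (Suc k) = qbin n k * qint (n - k)"
proof -
  have "(qbin n (Suc k) * qint (Suc k)) * qfact k = (qbin n k * qint (n - k)) * qfact k"
    using qbin_times_qfact[of n "Suc k"] qbin_times_qfact[of n k]
    by (simp add: qfact_def qfalling_def algebra_simps)
  then show ?thesis using qfact_nonzero[of k] by simp
qed

lemma Legendre_mod_3:
  "Legendre x 3 = (if x mod 3 = 0 then 0 else if x mod 3 = 1 then 1 else -1)"
proof -
  have square_mod_3: "(y::int)^2 mod 3 \<noteq> 2" for y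
  proof -
    have "y mod 3 \<in> {0,1,2}" by auto
    moreover have "y^2 mod 3 = (y mod 3)^2 mod 3" by (simp add: power_mod)
    ultimately show ?thesis by auto
  qed
  have "QuadRes 3 x" if "x mod 3 = 1"
    unfolding QuadRes_def using that by (intro exI[of _ 1]) (simp add: cong_def)
  moreover have "\<not> QuadRes 3 x" if "x mod 3 = 2"
    unfolding QuadRes_def cong_def using that square_mod_3 by metis
  moreover have "x mod 3 \<in> {0,1,2}" by auto
  ultimately show ?thesis unfolding Legendre_def by (auto simp: cong_def)
qed

lemma Legendre_3_dvd: "3 dvd k \<Longrightarrow> Legendre (int k) 3 = 0"
  by (simp add: Legendre_mod_3) presburger

abbreviation cpoly :: "int poly \<Rightarrow> complex poly" where
  "cpoly \<equiv> map_poly of_int"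

lemma cpoly_add: "cpoly (p + q) = cpoly p + cpoly q"
  by (intro poly_eqI) (simp add: coeff_map_poly)

lemma cpoly_mult: "cpoly (p * q) = cpoly p * cpoly q"
  by (intro poly_eqI) (simp add: coeff_map_poly coeff_mult)

lemma cpoly_sum: "cpoly (\<Sum>i\<in>A. f i) = (\<Sum>i\<in>A. cpoly (f i))"
  by (induction A rule: infinite_finite_induct) (auto simp: cpoly_add)

lemma cpoly_power: "cpoly (p ^ n) = cpoly p ^ n"
  by (induction n) (auto simp: cpoly_mult)

lemma cpoly_smult: "cpoly (Polynomial.smult c p) = Polynomial.smult (of_int c) (cpoly p)"
  by (intro poly_eqI) (simp add: coeff_map_poly)

lemma cpoly_monom: "cpoly (Polynomial.monom c n) = Polynomial.monom (of_int c) n"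
  by (simp add: map_poly_monom)

lemma cpoly_eq_0_iff: "cpoly p = 0 \<longleftrightarrow> p = 0"
  by (simp add: map_poly_eq_0_iff)

lemma degree_cpoly: "degree (cpoly p) = degree p"
  by (rule degree_map_poly) simp

lemma poly_cpoly_qint: "poly (cpoly (qint i)) z = (\<Sum>j<i. z ^ j)"
  by (simp add: qint_def cpoly_sum cpoly_monom poly_sum poly_monom)

section \<open>Divisibility transfer from the complex numbers to the integers\<close>

lemma monic_dvd_by_root_orders:
  fixes R P :: "complex poly"
  assumes R0: "R \<noteq> 0" and monic: "lead_coeff R = 1"
    and orders: "\<And>z. P \<noteq> 0 \<Longrightarrow> poly R z = 0 \<Longrightarrow> Polynomial.order z R \<le> Polynomial.order z P"
  shows "R dvd P"
proof (cases "P = 0")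
  case False
  let ?ZR = "{z. poly R z = 0}" and ?ZP = "{z. poly P z = 0}"
  have fin: "finite ?ZP" using False by (rule poly_roots_finite)
  have sub: "?ZR \<subseteq> ?ZP"
  proof
    fix z assume z: "z \<in> ?ZR"
    then have "Polynomial.order z R \<noteq> 0" using R0 by (simp add: order_root)
    then have "Polynomial.order z P \<noteq> 0" using orders[OF False] z by fastforce
    then show "z \<in> ?ZP" by (simp add: order_root)
  qed
  have "R = (\<Prod>z\<in>?ZR. [:-z, 1:] ^ Polynomial.order z R)"
    using complex_poly_decompose[of R] monic by simp
  also have "\<dots> dvd (\<Prod>z\<in>?ZP. [:-z, 1:] ^ Polynomial.order z P)"
    by (rule prod_dvd_prod_subset2[OF fin sub]) (auto intro: le_imp_power_dvd orders[OF False])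
  also have "\<dots> dvd Polynomial.smult (lead_coeff P) (\<Prod>z\<in>?ZP. [:-z, 1:] ^ Polynomial.order z P)"
    using False by (simp add: dvd_smult)
  also have "\<dots> = P" by (rule complex_poly_decompose)
  finally show ?thesis .
qed simp

text \<open>Divisibility by a monic integer polynomial can be checked over the complex numbers:
  the remainder of pseudo-division has smaller degree than the divisor.\<close>
lemma monic_int_poly_dvd_transfer:
  fixes p q :: "int poly"
  assumes monic: "lead_coeff p = 1" and dvd: "cpoly p dvd cpoly q"
  shows "p dvd q"
proof -
  have p0: "p \<noteq> 0" using monic by auto
  obtain s r where div: "pseudo_divmod q p = (s, r)" by (cases "pseudo_divmod q p")
  from pseudo_divmod[OF p0 div] monic
  have q_eq: "q = p * s + r" and r_small: "r = 0 \<or> degree r < degree p"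
    by auto
  have "cpoly q = cpoly p * cpoly s + cpoly r" using q_eq by (simp add: cpoly_add cpoly_mult)
  then have r_dvd: "cpoly p dvd cpoly r" using dvd by (metis dvd_add_right_iff dvd_triv_left)
  have "r = 0"
  proof (rule ccontr)
    assume "r \<noteq> 0"
    then have "degree (cpoly p) \<le> degree (cpoly r)"
      using r_dvd by (intro dvd_imp_degree_le) (simp_all add: cpoly_eq_0_iff)
    then show False using r_small \<open>r \<noteq> 0\<close> by (simp add: degree_cpoly)
  qed
  then show ?thesis using q_eq by simp
qed

text \<open>All complex roots of \<open>[n]_q\<close> are simple, because \<open>[n]_q\<close> divides the separable
  polynomial \<open>q^n - 1\<close>.\<close>
lemma order_qint_le_1:
  assumes "n > 0"
  shows "Polynomial.order z (cpoly (qint n)) \<le> 1"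
proof -
  let ?T = "Polynomial.monom (1::complex) n - 1"
  have T: "cpoly (qint n) * [:-1, 1:] = ?T"
  proof -
    have "cpoly (qint n * [:-1, 1:]) = cpoly (Polynomial.monom 1 n - 1)"
      by (simp only: qint_times_X_minus_1)
    moreover have "cpoly [:-1, 1:] = [:-1, 1:]" by (simp add: map_poly_pCons)
    moreover have "cpoly (Polynomial.monom 1 n - 1) = ?T"
      by (intro poly_eqI) (simp add: coeff_map_poly coeff_monom)
    ultimately show ?thesis by (simp only: cpoly_mult)
  qed
  have T0: "?T \<noteq> 0"
  proof
    assume "?T = 0"
    then have "Polynomial.coeff ?T n = 0" by simp
    then show False using assms by simp
  qed
  have "rsquarefree ?T"
    unfolding rsquarefree_roots
  proof (intro allI notI)
    fix x assume root: "poly ?T x = 0 \<and> poly (pderiv ?T) x = 0"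
    then have "x ^ n = 1" by (simp add: poly_monom)
    then have "x \<noteq> 0" using assms by (metis power_0_left zero_neq_one gr_implies_not0)
    moreover have "poly (pderiv ?T) x = of_nat n * x ^ (n - 1)"
      by (simp add: pderiv_diff pderiv_monom poly_monom)
    ultimately show False using root assms by simp
  qed
  then have "Polynomial.order z ?T \<le> 1" unfolding rsquarefree_def by (metis le_refl zero_le)
  moreover have "Polynomial.order z (cpoly (qint n)) \<le> Polynomial.order z ?T"
    by (rule dvd_imp_order_le[OF T0]) (metis T dvd_triv_left)
  ultimately show ?thesis by simp
qed

section \<open>q-binomial coefficients at a root of unity\<close>

lemma root_of_unity_order:
  fixes z :: "'a :: comm_monoid_mult"
  assumes "n > 0" "z ^ n = 1"
  obtains d where "d > 0" "\<And>i. z ^ i = 1 \<longleftrightarrow> d dvd i"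
proof -
  define d where "d = (LEAST i. 0 < i \<and> z ^ i = 1)"
  have d: "0 < d \<and> z ^ d = 1" unfolding d_def
    by (rule LeastI[of _ n]) (use assms in simp)
  have "z ^ i = 1 \<longleftrightarrow> d dvd i" for i
  proof
    assume "d dvd i"
    then show "z ^ i = 1" using d by (auto simp: dvd_def power_mult)
  next
    assume zi: "z ^ i = 1"
    have "z ^ i = z ^ (i mod d) * (z ^ d) ^ (i div d)"
      by (metis mod_div_mult_eq mult.commute power_add power_mult)
    then have "z ^ (i mod d) = 1" using zi d by simp
    then have "i mod d = 0"
      using Least_le[of "\<lambda>i. 0 < i \<and> z ^ i = 1" "i mod d"] d
      by (simp only: d_def[symmetric]) (meson mod_less_divisor not_le not_gr0)
    then show "d dvd i" by (simp add: dvd_eq_mod_eq_0)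
  qed
  then show ?thesis using d that by blast
qed

text \<open>The image of \<open>[N, k]_q\<close> in
  \<open>\<complex>[q]\<close> vanishes at z for d not dividing k, so it factors as \<open>(q - z) R_k\<close>;
  \<open>slope k = R_k(z)\<close> is the first-order coefficient of the expansion at z.\<close>
locale qbinom_at_root =
  fixes z :: complex and d N :: nat
  assumes order: "\<And>i. z ^ i = 1 \<longleftrightarrow> d dvd i" and three_dvd_d: "3 dvd d" and d_dvd_N: "d dvd N"
begin

definition zint :: "nat \<Rightarrow> complex" where
  "zint i = (\<Sum>j<i. z ^ j)"

definition Bz :: "nat \<Rightarrow> complex poly" where
  "Bz k = cpoly (qbin N k)"

definition Rz :: "nat \<Rightarrow> complex poly" where
  "Rz k = Bz k div [:-z, 1:]"

definition slope :: "nat \<Rightarrow> complex" where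
  "slope k = poly (Rz k) z"

lemma z_ne_1: "z \<noteq> 1"
  using order[of 1] three_dvd_d by auto

lemma zint_times_1_minus_z: "zint i * (1 - z) = 1 - z ^ i"
  unfolding zint_def by (simp add: one_diff_power_eq mult.commute)

lemma zint_eq_0_iff: "zint i = 0 \<longleftrightarrow> d dvd i"
proof -
  have "zint i = 0 \<longleftrightarrow> zint i * (1 - z) = 0" using z_ne_1 by auto
  also have "\<dots> \<longleftrightarrow> z ^ i = 1" by (simp add: zint_times_1_minus_z)
  finally show ?thesis using order by simp
qed

lemma zint_periodic: "zint (i + d * t) = zint i"
proof -
  have "z ^ (d * t) = 1" using order by simp
  then have "zint (i + d * t) * (1 - z) = zint i * (1 - z)"
    by (simp add: zint_times_1_minus_z power_add)
  then show ?thesis using z_ne_1 by simp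
qed

lemma poly_qint_at_z: "poly (cpoly (qint i)) z = zint i"
  by (simp add: poly_cpoly_qint zint_def)

lemma power_z_cong: "[i = j] (mod d) \<Longrightarrow> z ^ i = z ^ j"
proof -
  have "z ^ i = z ^ (i mod d)" for i
  proof -
    have "z ^ i = z ^ (i mod d) * (z ^ d) ^ (i div d)"
      by (metis mod_div_mult_eq mult.commute power_add power_mult)
    then show ?thesis using order[of d] by simp
  qed
  then show "[i = j] (mod d) \<Longrightarrow> z ^ i = z ^ j" by (metis cong_def)
qed

lemma Bz_ratio: "Bz (Suc k) * cpoly (qint (Suc k)) = Bz k * cpoly (qint (N - k))"
  unfolding Bz_def using qbin_ratio[of N k] by (metis cpoly_mult)

lemma Bz_root: "k < N \<Longrightarrow> \<not> d dvd k \<Longrightarrow> poly (Bz k) z = 0"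
proof (induction k)
  case (Suc k)
  have "poly (Bz (Suc k)) z * zint (Suc k) = poly (Bz k) z * zint (N - k)"
    using arg_cong[OF Bz_ratio[of k], of "\<lambda>p. poly p z"] by (simp add: poly_qint_at_z)
  moreover have "poly (Bz k) z * zint (N - k) = 0"
  proof (cases "d dvd k")
    case True
    then have "d dvd N - k" using d_dvd_N by (simp add: dvd_diff_nat)
    then show ?thesis by (simp add: zint_eq_0_iff)
  qed (use Suc in simp)
  ultimately show ?case using Suc.prems by (simp add: zint_eq_0_iff)
qed simp

lemma Bz_factor: "k < N \<Longrightarrow> \<not> d dvd k \<Longrightarrow> Bz k = [:-z, 1:] * Rz k"
  using Bz_root[of k] unfolding Rz_def
  by (metis dvd_mult_div_cancel poly_eq_0_iff_dvd)

lemma slope_ratio: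
  assumes "Suc k < N" "\<not> d dvd k" "\<not> d dvd Suc k"
  shows "slope (Suc k) * zint (Suc k) = slope k * zint (N - k)"
proof -
  have "Bz k = [:-z, 1:] * Rz k" "Bz (Suc k) = [:-z, 1:] * Rz (Suc k)"
    using Bz_factor assms by auto
  then have "[:-z, 1:] * (Rz (Suc k) * cpoly (qint (Suc k))) = [:-z, 1:] * (Rz k * cpoly (qint (N - k)))"
    using Bz_ratio[of k] by (metis mult.assoc)
  moreover have "[:-z, 1:] \<noteq> 0" by simp
  ultimately have "Rz (Suc k) * cpoly (qint (Suc k)) = Rz k * cpoly (qint (N - k))"
    using mult_left_cancel by blast
  from arg_cong[OF this, of "\<lambda>p. poly p z"] show ?thesis
    by (simp add: slope_def poly_qint_at_z)
qed

lemma slope_interval: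
  assumes "k1 \<le> k2" "k2 < N" "\<And>i. k1 \<le> i \<Longrightarrow> i \<le> k2 \<Longrightarrow> \<not> d dvd i"
  shows "slope k2 * (\<Prod>i\<in>{k1<..k2}. zint i) = slope k1 * (\<Prod>i\<in>{k1..<k2}. zint (N - i))"
  using assms
proof (induction k2 rule: dec_induct)
  case (step k)
  have left: "{k1<..Suc k} = insert (Suc k) {k1<..k}" and right: "{k1..<Suc k} = insert k {k1..<k}"
    using step by auto
  have "slope (Suc k) * (\<Prod>i\<in>{k1<..Suc k}. zint i) = (slope (Suc k) * zint (Suc k)) * (\<Prod>i\<in>{k1<..k}. zint i)"
    by (simp add: left mult_ac)
  also have "\<dots> = zint (N - k) * (slope k * (\<Prod>i\<in>{k1<..k}. zint i))"
    using step by (subst slope_ratio) (auto simp: mult_ac)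
  also have "\<dots> = slope k1 * (\<Prod>i\<in>{k1..<Suc k}. zint (N - i))"
    using step by (simp add: right mult_ac)
  finally show ?case .
qed simp

text \<open>The products from
  \<open>slope_interval\<close> coincide because \<open>N - i \<equiv> k1 + k2 - i (mod d)\<close>.\<close>
lemma slope_reflect:
  assumes r: "0 < r" "2 * r < d" and s: "d * (2 * s + 1) \<le> N"
  shows "slope (d * s + r) = slope (d * s + (d - r))"
proof -
  define k1 where "k1 = d * s + r"
  define k2 where "k2 = d * s + (d - r)"
  have k12: "k1 \<le> k2" and k2N: "k2 < N" and k12N: "k1 + k2 \<le> N"
    using r s by (simp_all add: k1_def k2_def algebra_simps)
  have not_dvd: "\<not> d dvd i" if i: "k1 \<le> i" "i \<le> k2" for i
  proof
    assume "d dvd i"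
    then have "d dvd i - d * s" by (simp add: dvd_diff_nat)
    moreover have "0 < i - d * s" "i - d * s < d" using i r by (auto simp: k1_def k2_def)
    ultimately show False by (simp add: nat_dvd_not_less)
  qed
  obtain t where t: "N - k1 - k2 = d * t"
  proof -
    have "d dvd N - d * (2 * s + 1)" using d_dvd_N by (simp add: dvd_diff_nat)
    moreover have "N - k1 - k2 = N - d * (2 * s + 1)"
      using r by (simp add: k1_def k2_def algebra_simps)
    ultimately show ?thesis using that by (auto simp: dvd_def)
  qed
  have "(\<Prod>i\<in>{k1..<k2}. zint (N - i)) = (\<Prod>i\<in>{k1<..k2}. zint i)"
  proof (rule prod.reindex_bij_witness[where i="\<lambda>j. k1 + k2 - j" and j="\<lambda>j. k1 + k2 - j"])
    fix i assume "i \<in> {k1..<k2}"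
    then have "N - i = (k1 + k2 - i) + d * t" using t k12N by auto
    then show "zint (k1 + k2 - i) = zint (N - i)" by (simp add: zint_periodic)
  qed auto
  moreover have "(\<Prod>i\<in>{k1<..k2}. zint i) \<noteq> 0"
    using not_dvd by (auto simp: zint_eq_0_iff)
  ultimately have "slope k2 = slope k1"
    using slope_interval[OF k12 k2N not_dvd] by simp
  then show ?thesis by (simp add: k1_def k2_def)
qed

end

locale legendre_sum_at_root = qbinom_at_root +
  fixes H :: nat and e :: "nat \<Rightarrow> nat"
  assumes N_eq: "N = 2 * H" and d_dvd_H: "d dvd H" and odd_d: "odd d"
    and e_reflect: "\<And>k. k \<in> {1..H-1} \<Longrightarrow> [e (d * (k div d) + (d - k mod d)) = e k] (mod d)"
begin

definition reflect :: "nat \<Rightarrow> nat" where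
  "reflect k = (if 3 dvd k then k else d * (k div d) + (d - k mod d))"

text \<open>The value at z of the k-th term of the sum divided by \<open>q - z\<close>.\<close>
definition term_at_z :: "nat \<Rightarrow> complex" where
  "term_at_z k = of_int (Legendre (int k) 3) * z ^ e k * slope k"

lemma d_pos: "d > 0"
  using odd_d by (cases d) auto

lemma reflect_props:
  assumes k: "k \<in> {1..H-1}" and k3: "\<not> 3 dvd k"
  shows "reflect k \<in> {1..H-1}" "reflect (reflect k) = k" "term_at_z (reflect k) = - term_at_z k"
proof -
  define s where "s = k div d"
  define r where "r = k mod d"
  have k_eq: "k = d * s + r" by (simp add: s_def r_def)
  have rd: "r < d" using d_pos by (simp add: r_def)
  have r0: "r \<noteq> 0"
    using k3 three_dvd_d by (auto simp: r_def dvd_eq_mod_eq_0[symmetric] intro: dvd_trans)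
  have refl_k: "reflect k = d * s + (d - r)" using k3 by (simp add: reflect_def s_def r_def)
  have "d * s < H" using k k_eq by auto
  then have block: "d * (s + 1) \<le> H"
    using d_dvd_H d_pos by (metis Suc_eq_plus1 Suc_leI dvd_mult_div_cancel mult_le_mono2
        mult_less_cancel1)
  show "reflect k \<in> {1..H-1}" using refl_k rd r0 block by (auto simp: algebra_simps)
  have "3 dvd reflect k \<longleftrightarrow> 3 dvd (d - r)" using refl_k three_dvd_d by (simp add: dvd_add_right_iff)
  also have "\<dots> \<longleftrightarrow> 3 dvd r"
    using three_dvd_d rd by (metis dvd_diff_nat less_imp_le_nat diff_diff_cancel)
  finally have k3': "\<not> 3 dvd reflect k" using k_eq k3 three_dvd_d by (simp add: dvd_add_right_iff)
  have "reflect k = (d - r) + d * s" using refl_k by simp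
  then have "reflect k div d = s" "reflect k mod d = d - r"
    using rd r0 by (simp_all only: div_mult_self2 mod_mult_self2 gr_implies_not0 not_False_eq_True) simp_all
  then show "reflect (reflect k) = k" using k3' rd by (simp add: reflect_def k_eq)
  have "d * (2 * s + 1) \<le> N" using block N_eq by (simp add: algebra_simps)
  then have slope_eq: "slope (reflect k) = slope k"
  proof (cases "2 * r < d")
    case False
    then have "2 * (d - r) < d" using odd_d by presburger
    then show ?thesis using slope_reflect[of "d - r" s] \<open>d * (2 * s + 1) \<le> N\<close> rd refl_k k_eq by simp
  qed (use slope_reflect[of r s] r0 refl_k k_eq in simp)
  have exp_eq: "z ^ e (reflect k) = z ^ e k"
    using e_reflect[OF k] k3 by (simp add: power_z_cong reflect_def)
  have "reflect k + k = d * (2 * s + 1)" using refl_k k_eq rd by (simp add: algebra_simps)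
  then have "3 dvd reflect k + k" using three_dvd_d by simp
  then have "(int (reflect k) + int k) mod 3 = 0" by presburger
  then have "Legendre (int (reflect k)) 3 = - Legendre (int k) 3"
    using k3 k3' unfolding Legendre_mod_3 by presburger
  then show "term_at_z (reflect k) = - term_at_z k" unfolding term_at_z_def using exp_eq slope_eq by simp
qed

text \<open>The involution \<open>reflect\<close> pairs off the terms with opposite signs.\<close>
lemma sum_term_at_z: "(\<Sum>k\<in>{1..H-1}. term_at_z k) = 0"
proof -
  let ?K = "{1..H-1}"
  have props: "reflect k \<in> ?K \<and> reflect (reflect k) = k \<and> term_at_z (reflect k) = - term_at_z k"
    if "k \<in> ?K" for k
  proof (cases "3 dvd k")
    case True then show ?thesis using that by (simp add: reflect_def term_at_z_def Legendre_3_dvd)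
  qed (use reflect_props[OF that] in simp)
  have "(\<Sum>k\<in>?K. term_at_z k) = (\<Sum>k\<in>?K. term_at_z (reflect k))"
    by (rule sum.reindex_bij_witness[where i=reflect and j=reflect]) (metis props)+
  also have "\<dots> = - (\<Sum>k\<in>?K. term_at_z k)" by (simp add: props sum_negf)
  finally show ?thesis by simp
qed

lemma double_root:
  "[:-z, 1:] ^ 2 dvd (\<Sum>k\<in>{1..H-1}.
      Polynomial.smult (of_int (Legendre (int k) 3)) (Polynomial.monom 1 (e k) * Bz k))"
proof -
  define W where "W = (\<Sum>k\<in>{1..H-1}.
      Polynomial.smult (of_int (Legendre (int k) 3)) (Polynomial.monom 1 (e k) * Rz k))"
  have "Polynomial.smult (of_int (Legendre (int k) 3)) (Polynomial.monom 1 (e k) * Bz k)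
      = [:-z, 1:] * Polynomial.smult (of_int (Legendre (int k) 3)) (Polynomial.monom 1 (e k) * Rz k)"
    if k: "k \<in> {1..H-1}" for k
  proof (cases "3 dvd k")
    case False
    then have "\<not> d dvd k" using three_dvd_d by (meson dvd_trans)
    moreover have "k < N" using k N_eq by auto
    ultimately show ?thesis using Bz_factor by (metis mult_smult_right mult.left_commute)
  qed (simp add: Legendre_3_dvd)
  then have sum_eq: "(\<Sum>k\<in>{1..H-1}.
      Polynomial.smult (of_int (Legendre (int k) 3)) (Polynomial.monom 1 (e k) * Bz k)) = [:-z, 1:] * W"
    unfolding W_def by (simp add: sum_distrib_left)
  have "poly W z = (\<Sum>k\<in>{1..H-1}. term_at_z k)"
    unfolding W_def term_at_z_def slope_def by (simp add: poly_sum poly_monom mult_ac)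
  then have "[:-z, 1:] dvd W" using sum_term_at_z by (simp add: poly_eq_0_iff_dvd)
  then show ?thesis unfolding sum_eq power2_eq_square by (rule mult_dvd_mono[OF dvd_refl])
qed

end

lemma cong_shift_multiple:
  assumes "\<And>x. [\<psi> (x + int d) = \<psi> x] (mod int d)"
  shows "[\<psi> (x + int d * int t) = \<psi> x] (mod int d)"
proof (induction t)
  case (Suc t)
  have "[\<psi> (x + int d * int (Suc t)) = \<psi> (x + int d * int t)] (mod int d)"
    using assms[of "x + int d * int t"] by (simp add: algebra_simps)
  then show ?case using Suc cong_trans by blast
qed simp

lemma cong_block_reflection:
  fixes \<psi> :: "int \<Rightarrow> int" and d :: nat
  assumes "d > 0"
    and even: "\<And>x. [\<psi> x = \<psi> (-x)] (mod int d)"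
    and periodic: "\<And>x. [\<psi> (x + int d) = \<psi> x] (mod int d)"
  shows "[\<psi> (int (d * (k div d) + (d - k mod d))) = \<psi> (int k)] (mod int d)"
proof -
  define s where "s = k div d"
  define r where "r = k mod d"
  have rd: "r < d" using assms(1) by (simp add: r_def)
  have shift: "int (d * s + (d - r)) = (int d - int r) + int d * int s" using rd by simp
  have "[\<psi> (int (d * s + (d - r))) = \<psi> (int d - int r)] (mod int d)"
    unfolding shift by (rule cong_shift_multiple[of \<psi> d, OF periodic])
  also have "[\<psi> (int d - int r) = \<psi> (int r - int d)] (mod int d)"
    using even[of "int d - int r"] by simp
  also have "[\<psi> (int r - int d) = \<psi> (int r)] (mod int d)"
    using periodic[of "int r - int d"] by (simp add: cong_sym)
  also have "[\<psi> (int r) = \<psi> (int k)] (mod int d)"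
    using cong_shift_multiple[of \<psi> d, OF periodic, of "int r" s]
    by (simp add: s_def r_def cong_sym algebra_simps flip: of_nat_mult of_nat_add)
  finally show ?thesis by (simp add: s_def r_def)
qed

lemma order_of_root_of_qint_3_power:
  fixes z :: complex
  assumes root: "poly (cpoly (qint (3 ^ a))) z = 0"
  obtains j where "j \<in> {1..a}" "\<And>i. z ^ i = 1 \<longleftrightarrow> 3 ^ j dvd i"
proof -
  have sum0: "(\<Sum>i<3 ^ a. z ^ i) = 0" using root by (simp add: poly_cpoly_qint)
  then have z_power: "z ^ 3 ^ a = 1" using one_diff_power_eq[of z "3 ^ a"] by simp
  then obtain d where order: "\<And>i. z ^ i = 1 \<longleftrightarrow> d dvd i"
    using root_of_unity_order[of "3 ^ a" z] by auto
  have "d dvd 3 ^ a" using order z_power by simp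
  then obtain j where j: "j \<le> a" "d = 3 ^ j"
    by (auto simp: divides_primepow_nat)
  have "j \<noteq> 0"
  proof
    assume "j = 0"
    then have "z = 1" using order[of 1] j by simp
    then show False using sum0 by simp
  qed
  then show ?thesis using that[of j] j order by simp
qed

lemma double_root_at_root_of_qint:
  fixes a m M0 :: nat and \<psi> :: "int \<Rightarrow> int" and z :: complex
  assumes m: "m > 0"
    and hyp: "\<And>k j. j \<in> {1..a} \<Longrightarrow>
           [\<psi> k = \<psi> (-k)] (mod (3 ^ a)) \<and> [\<psi> (k + 3 ^ j) = \<psi> k] (mod (3 ^ j))"
    and M0: "\<And>k. k \<le> 2 * 3 ^ a * m \<Longrightarrow> 0 \<le> \<psi> (int k) + int M0"
    and root: "poly (cpoly (qint (3 ^ a))) z = 0"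
  shows "[:-z, 1:] ^ 2 dvd (\<Sum>k\<in>{1..3 ^ a * m - 1}. Polynomial.smult (of_int (Legendre (int k) 3))
            (Polynomial.monom 1 (nat (\<psi> (int k) + int M0)) * cpoly (qbin (2 * 3 ^ a * m) k)))"
proof -
  define n :: nat where "n = 3 ^ a"
  define H where "H = n * m"
  define e where "e k = nat (\<psi> (int k) + int M0)" for k
  obtain j where ja: "j \<in> {1..a}" and order: "\<And>i. z ^ i = 1 \<longleftrightarrow> 3 ^ j dvd i"
    using order_of_root_of_qint_3_power[OF root] by blast
  define d :: nat where "d = 3 ^ j"
  have d_pos: "d > 0" by (simp add: d_def)
  have "d dvd n" using ja by (simp add: d_def n_def le_imp_power_dvd)
  have "int d dvd 3 ^ a" using ja by (simp add: d_def le_imp_power_dvd)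
  then have even: "[\<psi> x = \<psi> (-x)] (mod int d)" for x
    using hyp[OF ja, of x] cong_dvd_modulus by blast
  have periodic: "[\<psi> (x + int d) = \<psi> x] (mod int d)" for x
    using hyp[OF ja, of x] by (simp add: d_def)
  have e_reflect: "[e (d * (k div d) + (d - k mod d)) = e k] (mod d)" if "k \<in> {1..H-1}" for k
  proof -
    have "d \<le> n * m" using \<open>d dvd n\<close> m by (intro dvd_imp_le) (simp_all add: n_def)
    moreover have "k \<le> n * m" using that by (auto simp: H_def)
    moreover have "d * (k div d) + (d - k mod d) \<le> k + d" by (simp add: add_mono)
    ultimately have "d * (k div d) + (d - k mod d) \<le> 2 * 3 ^ a * m" "k \<le> 2 * 3 ^ a * m"
      by (simp_all add: n_def)
    then have "0 \<le> \<psi> (int (d * (k div d) + (d - k mod d))) + int M0" "0 \<le> \<psi> (int k) + int M0"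
      using M0 by blast+
    then have "[int (e (d * (k div d) + (d - k mod d))) = int (e k)] (mod int d)"
      unfolding e_def using cong_block_reflection[OF d_pos even periodic, of k]
      by (simp add: cong_add_rcancel)
    then show ?thesis by (simp add: cong_int_iff)
  qed
  interpret legendre_sum_at_root z d "2 * H" H e
  proof
    show "\<And>i. z ^ i = 1 \<longleftrightarrow> d dvd i" by (simp add: order d_def)
  qed (use \<open>d dvd n\<close> ja e_reflect in \<open>auto simp: H_def d_def\<close>)
  show ?thesis using double_root unfolding Bz_def by (simp add: H_def n_def e_def mult.assoc)
qed

lemma qint_square_dvd_shifted_sum:
  fixes a m M0 :: nat and \<psi> :: "int \<Rightarrow> int"
  assumes m: "m > 0"
    and hyp: "\<And>k j. j \<in> {1..a} \<Longrightarrow>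
           [\<psi> k = \<psi> (-k)] (mod (3 ^ a)) \<and> [\<psi> (k + 3 ^ j) = \<psi> k] (mod (3 ^ j))"
    and M0: "\<And>k. k \<le> 2 * 3 ^ a * m \<Longrightarrow> 0 \<le> \<psi> (int k) + int M0"
  shows "qint (3 ^ a) ^ 2 dvd (\<Sum>k\<in>{1..3 ^ a * m - 1}. Polynomial.smult (Legendre (int k) 3)
            (Polynomial.monom 1 (nat (\<psi> (int k) + int M0)) * qbinom (2 * 3 ^ a * m) k))"
    (is "?Q ^ 2 dvd ?P")
proof (rule monic_int_poly_dvd_transfer)
  have "3 ^ a = Suc (3 ^ a - 1)" by simp
  then have "lead_coeff ?Q = 1" using qint_monic[of "3 ^ a - 1"] by metis
  then show monic: "lead_coeff (?Q ^ 2) = 1" by (simp add: lead_coeff_power)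
  have Q0: "cpoly ?Q \<noteq> 0" by (simp add: cpoly_eq_0_iff qint_nonzero)
  have "cpoly (?Q ^ 2) dvd cpoly ?P"
  proof (rule monic_dvd_by_root_orders)
    show "cpoly (?Q ^ 2) \<noteq> 0" using Q0 by (simp add: cpoly_power)
    show "lead_coeff (cpoly (?Q ^ 2)) = 1" using monic by (simp add: degree_cpoly coeff_map_poly)
    fix z assume P0: "cpoly ?P \<noteq> 0" and "poly (cpoly (?Q ^ 2)) z = 0"
    then have root: "poly (cpoly ?Q) z = 0" by (simp add: cpoly_power)
    have "Polynomial.order z (cpoly (?Q ^ 2)) = 2 * Polynomial.order z (cpoly ?Q)"
      using Q0 by (simp add: cpoly_power cpoly_mult power2_eq_square order_mult)
    also have "\<dots> \<le> 2" using order_qint_le_1[of "3 ^ a" z] by simp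
    also have "2 \<le> Polynomial.order z (cpoly ?P)"
    proof -
      have "[:-z, 1:] ^ 2 dvd cpoly ?P"
        using double_root_at_root_of_qint[OF m hyp M0 root]
        by (simp add: cpoly_sum cpoly_smult cpoly_mult cpoly_monom qbinom_eq_qbin)
      then show ?thesis using P0 by (simp add: order_divides)
    qed
    finally show "Polynomial.order z (cpoly (?Q ^ 2)) \<le> Polynomial.order z (cpoly ?P)" .
  qed
  then show "cpoly (?Q ^ 2) dvd cpoly ?P" .
qed

section \<open>Passage to Laurent polynomials\<close>

lemma poly_to_fls_0 [simp]: "poly_to_fls 0 = 0"
  by (simp add: poly_to_fls_def)

lemma poly_to_fls_1 [simp]: "poly_to_fls 1 = 1"
  by (simp add: poly_to_fls_def)

lemma poly_to_fls_add: "poly_to_fls (p + q) = poly_to_fls p + poly_to_fls q"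
  by (simp add: poly_to_fls_def fps_of_poly_add)

lemma poly_to_fls_mult: "poly_to_fls (p * q) = poly_to_fls p * poly_to_fls q"
  by (simp add: poly_to_fls_def fps_of_poly_mult fls_times_fps_to_fls)

lemma poly_to_fls_sum: "poly_to_fls (\<Sum>i\<in>A. f i) = (\<Sum>i\<in>A. poly_to_fls (f i))"
  by (induction A rule: infinite_finite_induct) (auto simp: poly_to_fls_add)

lemma poly_to_fls_power: "poly_to_fls (p ^ n) = poly_to_fls p ^ n"
  by (induction n) (auto simp: poly_to_fls_mult)

lemma poly_to_fls_smult: "poly_to_fls (Polynomial.smult c p) = of_int c * poly_to_fls p"
proof -
  have "Polynomial.smult c p = of_int c * p" by (simp add: of_int_poly)
  moreover have "poly_to_fls (of_int c) = of_int c"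
    by (simp add: poly_to_fls_def of_int_poly fps_of_poly_const flip: fps_to_fls_of_int fps_of_int)
  ultimately show ?thesis by (simp add: poly_to_fls_mult)
qed

lemma poly_to_fls_monom: "poly_to_fls (Polynomial.monom 1 e) = fls_X_intpow (int e)"
  by (simp add: poly_to_fls_def fps_of_poly_monom' fps_to_fls_power fls_X_power_conv_shift_1)

lemma laurent_poly_shift: "laurent_poly (fls_X_intpow (- int M) * poly_to_fls G)"
proof -
  have "{n. fls_nth (fls_X_intpow (- int M) * poly_to_fls G) n \<noteq> 0} \<subseteq> {- int M .. int (degree G)}"
  proof
    fix n assume "n \<in> {n. fls_nth (fls_X_intpow (- int M) * poly_to_fls G) n \<noteq> 0}"
    then have nz: "fls_nth (poly_to_fls G) (n + int M) \<noteq> 0"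
      using fls_X_intpow_times_conv_shift(1)[of "- int M" "poly_to_fls G"] by simp
    then have "0 \<le> n + int M" by (auto simp: poly_to_fls_def split: if_splits)
    moreover have "Polynomial.coeff G (nat (n + int M)) \<noteq> 0"
      using nz calculation by (simp add: poly_to_fls_def)
    then have "nat (n + int M) \<le> degree G" by (rule le_degree)
    ultimately show "n \<in> {- int M .. int (degree G)}" by simp
  qed
  then show ?thesis unfolding laurent_poly_def by (rule finite_subset) simp
qed

text \<open>The first (general) assertion of the theorem: shift all exponents \<open>\<psi>(k)\<close> by a common
  M0 into the natural numbers, apply the polynomial divisibility and shift back.\<close>
lemma legendre_qbinom_sum_divisible:
  fixes a m :: nat and \<psi> :: "int \<Rightarrow> int"
  assumes m: "m > 0"
    and hyp: "\<And>k j. j \<in> {1..a} \<Longrightarrow>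
           [\<psi> k = \<psi> (-k)] (mod (3 ^ a)) \<and> [\<psi> (k + 3 ^ j) = \<psi> k] (mod (3 ^ j))"
  shows "\<exists>g. laurent_poly g \<and>
            (\<Sum>k = 1..3 ^ a * m - 1.
               fls_X_intpow (\<psi> (int k)) * of_int (Legendre (int k) 3)
                 * poly_to_fls (qbinom (2 * 3 ^ a * m) k))
            = (poly_to_fls (qint (3 ^ a)))\<^sup>2 * g"
proof -
  define M0 where "M0 = (\<Sum>k\<le>2 * 3 ^ a * m. nat (- \<psi> (int k)))"
  have M0: "0 \<le> \<psi> (int k) + int M0" if "k \<le> 2 * 3 ^ a * m" for k
  proof -
    have "nat (- \<psi> (int k)) \<le> M0" unfolding M0_def
      by (rule member_le_sum) (use that in auto)
    then show ?thesis by linarith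
  qed
  define e where "e k = nat (\<psi> (int k) + int M0)" for k
  obtain G where G: "(\<Sum>k\<in>{1..3 ^ a * m - 1}. Polynomial.smult (Legendre (int k) 3)
            (Polynomial.monom 1 (e k) * qbinom (2 * 3 ^ a * m) k)) = qint (3 ^ a) ^ 2 * G"
    using qint_square_dvd_shifted_sum[OF m hyp M0] unfolding e_def by (auto simp: dvd_def)
  have "fls_X_intpow (\<psi> (int k)) * of_int (Legendre (int k) 3) * poly_to_fls (qbinom (2 * 3 ^ a * m) k)
      = fls_X_intpow (- int M0) * poly_to_fls (Polynomial.smult (Legendre (int k) 3)
            (Polynomial.monom 1 (e k) * qbinom (2 * 3 ^ a * m) k))"
    if "k \<in> {1..3 ^ a * m - 1}" for k
  proof -
    have "k \<le> 2 * 3 ^ a * m" using that by auto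
    then have "int (e k) = \<psi> (int k) + int M0" using M0 by (simp add: e_def)
    then have "fls_X_intpow (\<psi> (int k)) = (fls_X_intpow (- int M0) :: int fls) * fls_X_intpow (int (e k))"
      using fls_X_intpow_times_fls_X_intpow[of "- int M0" "int (e k)", where 'a=int] by simp
    then show ?thesis by (simp add: poly_to_fls_smult poly_to_fls_mult poly_to_fls_monom mult_ac)
  qed
  then have "(\<Sum>k = 1..3 ^ a * m - 1.
               fls_X_intpow (\<psi> (int k)) * of_int (Legendre (int k) 3)
                 * poly_to_fls (qbinom (2 * 3 ^ a * m) k))
      = fls_X_intpow (- int M0) * poly_to_fls (qint (3 ^ a) ^ 2 * G)"
    by (simp add: G[symmetric] poly_to_fls_sum sum_distrib_left)
  also have "\<dots> = (poly_to_fls (qint (3 ^ a)))\<^sup>2 * (fls_X_intpow (- int M0) * poly_to_fls G)"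
    by (simp add: poly_to_fls_mult poly_to_fls_power mult_ac)
  finally show ?thesis using laurent_poly_shift by blast
qed

theorem theorem2p1:
  fixes a m :: nat and \<psi> :: "int \<Rightarrow> int"
  assumes "a > 0" and "m > 0"
    and "\<And>k j. j \<in> {1..a} \<Longrightarrow>
           [\<psi> k = \<psi> (-k)] (mod (3 ^ a)) \<and> [\<psi> (k + 3 ^ j) = \<psi> k] (mod (3 ^ j))"
  shows "(\<exists>g. laurent_poly g \<and>
            (\<Sum>k = 1..3 ^ a * m - 1.
               fls_X_intpow (\<psi> (int k)) * of_int (Legendre (int k) 3)
                 * poly_to_fls (qbinom (2 * 3 ^ a * m) k))
            = (poly_to_fls (qint (3 ^ a)))\<^sup>2 * g)
       \<and> (\<exists>g. laurent_poly g \<and>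
            (\<Sum>k = 1..3 ^ a * m - 1.
               of_int (Legendre (int k) 3) * poly_to_fls (qbinom (2 * 3 ^ a * m) k))
            = (poly_to_fls (qint (3 ^ a)))\<^sup>2 * g)"
proof
  show "\<exists>g. laurent_poly g \<and>
            (\<Sum>k = 1..3 ^ a * m - 1.
               fls_X_intpow (\<psi> (int k)) * of_int (Legendre (int k) 3)
                 * poly_to_fls (qbinom (2 * 3 ^ a * m) k))
            = (poly_to_fls (qint (3 ^ a)))\<^sup>2 * g"
    using legendre_qbinom_sum_divisible[OF assms(2,3)] .
  show "\<exists>g. laurent_poly g \<and>
            (\<Sum>k = 1..3 ^ a * m - 1.
               of_int (Legendre (int k) 3) * poly_to_fls (qbinom (2 * 3 ^ a * m) k))
            = (poly_to_fls (qint (3 ^ a)))\<^sup>2 * g"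
    using legendre_qbinom_sum_divisible[where \<psi>="\<lambda>_. 0", OF assms(2)] by simp
qed

end
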